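(* Let $b\in\mathbb Z_T$ be nonzero and let $B_1=\cdots=B_s=\{0,b\}$ be $s$ identical size-$2$ subsets of $\mathbb Z_T$ with $s\ge T^2$. Then the multiset $B_1+B_2+\cdots+B_s$ has bias at most $4|H|/s^{1/2}$ with respect to the subgroup $H=\langle b\rangle$.
   Context: $\mathbb Z_T$ is the additive cyclic group of order $T$. For multisets $A,B$, $A+B=\{a+b:a\in A,b\in B\}$ as a multiset; $\mu_A(x)$ is the multiplicity of $x$ in $A$. A multiset $A$ has bias at most $\epsilon$ with respect to a subgroup $H$ if $\mu_A(a)\le(1+\epsilon)\mu_A(a+h)$ for all $a\in A$ and all $h\in H$. $\langle b\rangle$ is the subgroup generated by $b$. *)

theory Defs
  imports Complex_Main "HOL-Library.Multiset"
begin

text \<open>Z_T is modelled by residues {0..<T} (nat), addition is (x+y) mod T.\<close>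

definition zmod_sumset :: "nat \<Rightarrow> nat multiset \<Rightarrow> nat multiset \<Rightarrow> nat multiset" where
  "zmod_sumset T A B = (\<Sum>a\<in>#A. image_mset (\<lambda>c. (a + c) mod T) B)"

fun iter_sumset :: "nat \<Rightarrow> nat multiset \<Rightarrow> nat \<Rightarrow> nat multiset" where
  "iter_sumset T B 0 = {#0#}"
| "iter_sumset T B (Suc s) = zmod_sumset T (iter_sumset T B s) B"

definition gen_subgroup :: "nat \<Rightarrow> nat \<Rightarrow> nat set" where
  "gen_subgroup T b = {(k * b) mod T | k. True}"

definition bias_at_most :: "nat \<Rightarrow> nat multiset \<Rightarrow> nat set \<Rightarrow> real \<Rightarrow> bool" where
  "bias_at_most T A H \<epsilon> \<longleftrightarrow>
     (\<forall>a \<in># A. \<forall>h \<in> H. real (count A a) \<le> (1 + \<epsilon>) * real (count A ((a + h) mod T)))"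

end

(* The multiset B_1 + ... + B_s is the image of the binomial multiset (k with multiplicity
   C(s,k), for k <= s) under k |-> k b mod T, and k b = k' b (mod T) iff k = k' modulo
   m = T / gcd(b,T) = |<b>|.  So the multiplicity of k b is the residue class sum N_j of the
   C(s,i) over i = j (mod m), with j = k mod m, and translating by an element of <b> passes
   from one class to another.  Unimodality of the binomial coefficients gives
   N_j <= N_j' + M for the central coefficient M, and since the m class sums add up to 2^s,
   also 2^s <= m (N_j' + M).  Together with 5 M sqrt s <= 4 * 2^s and m <= T <= sqrt s this
   yields N_j <= (1 + 4 m / sqrt s) N_j'. *)

theory Submission
  imports Defs "HOL-Number_Theory.Cong"
begin

fun binomial_mset :: "nat \<Rightarrow> nat multiset" where
  "binomial_mset 0 = {#0#}"
| "binomial_mset (Suc s) = binomial_mset s + image_mset Suc (binomial_mset s)"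

lemma count_binomial_mset: "count (binomial_mset s) k = s choose k"
proof -
  have shift: "count (image_mset Suc A) (Suc k) = count A k" "count (image_mset Suc A) 0 = 0"
    for A :: "nat multiset" and k
    by (induction A) auto
  show ?thesis
  proof (induction s arbitrary: k)
    case (Suc s)
    then show ?case by (cases k) (simp_all add: shift)
  qed (simp add: count_single)
qed

lemma set_binomial_mset: "set_mset (binomial_mset s) = {..s}"
  by (auto simp: count_binomial_mset simp flip: count_greater_zero_iff)

lemma zmod_sumset_zero_pair:
  "zmod_sumset T A {#0, b#}
     = image_mset (\<lambda>a. a mod T) A + image_mset (\<lambda>a. (a + b) mod T) A"
  unfolding zmod_sumset_def by (induction A) auto

lemma iter_sumset_zero_pair:
  "iter_sumset T {#0, b#} s = image_mset (\<lambda>k. (k * b) mod T) (binomial_mset s)"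
proof (induction s)
  case 0
  then show ?case by simp
next
  case (Suc s)
  have "((k * b) mod T + b) mod T = (Suc k * b) mod T" for k
    by (metis mod_add_left_eq mult_Suc add.commute)
  with Suc show ?case
    by (simp add: zmod_sumset_zero_pair multiset.map_comp o_def)
qed

lemma count_iter_sumset_zero_pair:
  "count (iter_sumset T {#0, b#} s) x = (\<Sum>k | k \<le> s \<and> (k * b) mod T = x. s choose k)"
proof -
  have "{k. k \<le> s \<and> (k * b) mod T = x} = (\<lambda>k. (k * b) mod T) -` {x} \<inter> {..s}"
    by auto
  then show ?thesis
    by (simp add: iter_sumset_zero_pair count_image_mset set_binomial_mset count_binomial_mset)
qed

lemma mult_mod_eq_iff_mod_div_gcd:
  fixes T b k k' :: nat
  assumes "0 < T"
  shows "(k * b) mod T = (k' * b) mod T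
           \<longleftrightarrow> k mod (T div gcd b T) = k' mod (T div gcd b T)"
proof -
  define g m b' where "g = gcd b T" and "m = T div g" and "b' = b div g"
  have "0 < g" "T = m * g" "b = b' * g" "coprime b' m"
    using assms div_gcd_coprime[of b T] by (simp_all add: g_def m_def b'_def)
  then have "(k * b) mod T = (k' * b) mod T \<longleftrightarrow> [k * b' = k' * b'] (mod m)"
    by (simp add: cong_def mult.assoc[symmetric] mod_mult_mult2)
  also have "\<dots> \<longleftrightarrow> [k = k'] (mod m)"
    using cong_mult_rcancel_nat[OF \<open>coprime b' m\<close>] by simp
  finally show ?thesis
    by (simp add: cong_def m_def g_def)
qed

lemma gen_subgroup_eq_image:
  assumes "0 < T"
  shows "gen_subgroup T b = (\<lambda>k. (k * b) mod T) ` {..<T div gcd b T}"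
proof -
  let ?m = "T div gcd b T"
  have "(k * b) mod T = (k mod ?m * b) mod T" for k
    using mult_mod_eq_iff_mod_div_gcd[OF assms] by simp
  moreover have "k mod ?m < ?m" for k
    using assms by (simp add: div_greater_zero_iff)
  ultimately show ?thesis
    unfolding gen_subgroup_def by blast
qed

lemma card_gen_subgroup:
  assumes "0 < T"
  shows "card (gen_subgroup T b) = T div gcd b T"
proof -
  have "inj_on (\<lambda>k. (k * b) mod T) {..<T div gcd b T}"
    using mult_mod_eq_iff_mod_div_gcd[OF assms] by (auto simp: inj_on_def)
  then show ?thesis
    by (simp add: gen_subgroup_eq_image[OF assms] card_image)
qed

definition residue_binomial_sum :: "nat \<Rightarrow> nat \<Rightarrow> nat \<Rightarrow> nat" where
  "residue_binomial_sum s m j = (\<Sum>k | k \<le> s \<and> k mod m = j. s choose k)"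

lemma count_iter_sumset_zero_pair_mult:
  assumes "0 < T"
  shows "count (iter_sumset T {#0, b#} s) ((k * b) mod T)
           = residue_binomial_sum s (T div gcd b T) (k mod (T div gcd b T))"
  unfolding count_iter_sumset_zero_pair residue_binomial_sum_def
  by (simp add: mult_mod_eq_iff_mod_div_gcd[OF assms])

lemma sum_residue_binomial_sum:
  assumes "0 < m"
  shows "(\<Sum>j<m. residue_binomial_sum s m j) = 2 ^ s"
proof -
  have "(\<Sum>j<m. residue_binomial_sum s m j)
        = (\<Sum>j<m. \<Sum>k\<in>{k \<in> {..s}. k mod m = j}. s choose k)"
    by (simp add: residue_binomial_sum_def)
  also have "\<dots> = (\<Sum>k\<le>s. s choose k)"
    by (rule sum.group) (use assms in auto)
  also have "\<dots> = 2 ^ s"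
    by (rule choose_row_sum)
  finally show ?thesis .
qed

lemma mod_eq_close_imp_eq:
  fixes x y m :: nat
  assumes "x mod m = y mod m" "x < y + m" "y < x + m"
  shows "x = y"
proof -
  have "u = v" if uv: "u mod m = v mod m" "v \<le> u" "u < v + m" for u v :: nat
  proof -
    obtain t where "u = v + m * t"
      using mod_eq_nat1E uv(1,2) by blast
    with uv(3) show ?thesis
      by (cases t) auto
  qed
  then show ?thesis
    using assms by (metis nat_le_linear)
qed

lemma mod_add_residue_shift:
  fixes k j j' m :: nat
  assumes "k mod m = j" "j' < m"
  shows "(k + (j' + m - j) mod m) mod m = j'"
proof -
  have "(k + (j' + m - j) mod m) mod m = (k mod m + (j' + m - j)) mod m"
    by (simp add: mod_add_left_eq mod_add_right_eq)
  also have "\<dots> = j'"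
    using assms mod_less_divisor[of m k] by simp
  finally show ?thesis .
qed

(* With d the shift from class j to class j', each k of class j with k + d <= p is matched
   with k + d and each with k + d > p + m with k + d - m; both moves go towards the peak p,
   so c does not decrease.  At most one k of class j lies in the window p < k + d <= p + m. *)
lemma sum_residue_class_unimodal_le:
  fixes c :: "nat \<Rightarrow> nat"
  assumes "j' < m" "p \<le> s"
    and up: "\<And>i k. i \<le> k \<Longrightarrow> k \<le> p \<Longrightarrow> c i \<le> c k"
    and down: "\<And>i k. p \<le> i \<Longrightarrow> i \<le> k \<Longrightarrow> c k \<le> c i"
  shows "(\<Sum>k | k \<le> s \<and> k mod m = j. c k)
           \<le> (\<Sum>k | k \<le> s \<and> k mod m = j'. c k) + c p"
proof -
  define A B where "A = {k. k \<le> s \<and> k mod m = j}"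
    and "B = {k. k \<le> s \<and> k mod m = j'}"
  define d where "d = (j' + m - j) mod m"
  define E where "E = {k \<in> A. p < k + d \<and> k + d \<le> p + m}"
  have "d < m"
    using assms(1) by (simp add: d_def)
  have shift_mod: "(k + d) mod m = j'" if "k \<in> A" for k
    unfolding d_def
    by (rule mod_add_residue_shift) (use that assms(1) in \<open>simp_all add: A_def\<close>)
  have "sum c (A - E) \<le> sum c B"
  proof (rule sum_le_included[where i = "\<lambda>y. if y \<le> p then y - d else y + m - d"])
    show "\<forall>x\<in>A - E. \<exists>y\<in>B. (if y \<le> p then y - d else y + m - d) = x \<and> c x \<le> c y"
    proof
      fix x assume x: "x \<in> A - E"
      show "\<exists>y\<in>B. (if y \<le> p then y - d else y + m - d) = x \<and> c x \<le> c y"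
      proof (cases "x + d \<le> p")
        case True
        then show ?thesis
          using x shift_mod up[of x "x + d"] assms(2)
          by (intro bexI[of _ "x + d"]) (auto simp: A_def B_def)
      next
        case False
        then have "p + m < x + d"
          using x by (auto simp: E_def)
        moreover have "(x + d - m) mod m = j'"
          using shift_mod[of x] x le_mod_geq[of m "x + d"] \<open>p + m < x + d\<close> by simp
        ultimately show ?thesis
          using x \<open>d < m\<close> down[of "x + d - m" x]
          by (intro bexI[of _ "x + d - m"]) (auto simp: A_def B_def)
      qed
    qed
  qed (auto simp: A_def B_def)
  moreover have "sum c E \<le> c p"
  proof (cases "E = {}")
    case False
    then obtain x where "x \<in> E" by blast
    have "y = x" if "y \<in> E" for y
      by (rule mod_eq_close_imp_eq[where m = m])
        (use that \<open>x \<in> E\<close> in \<open>auto simp: E_def A_def\<close>)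
    then have "E = {x}"
      using \<open>x \<in> E\<close> by blast
    moreover have "c x \<le> c p"
      using up[of x p] down[of p x] by (cases "x \<le> p") auto
    ultimately show ?thesis
      by simp
  qed simp
  moreover have "sum c A = sum c (A - E) + sum c E"
    by (rule sum.subset_diff) (auto simp: A_def E_def)
  ultimately have "sum c A \<le> sum c B + c p"
    by linarith
  then show ?thesis
    by (simp add: A_def B_def)
qed

lemma residue_binomial_sum_le:
  assumes "j' < m"
  shows "residue_binomial_sum s m j \<le> residue_binomial_sum s m j' + (s choose (s div 2))"
  unfolding residue_binomial_sum_def
proof (rule sum_residue_class_unimodal_le[OF assms])
  show "s div 2 \<le> s"
    by simp
  show "s choose i \<le> s choose k" if "i \<le> k" "k \<le> s div 2" for i k
    using that by (intro binomial_mono) auto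
  show "s choose k \<le> s choose i" if "s div 2 \<le> i" "i \<le> k" for i k
    using that binomial_antimono[of i k s] by (cases "k \<le> s") (auto simp: binomial_eq_0)
qed

lemma binomial_odd_middle: "Suc n * ((2 * n + 1) choose n) = (2 * n + 1) * ((2 * n) choose n)"
proof -
  have "(2 * n + 1) * ((2 * n) choose n) = ((2 * n + 1) choose (n + 1)) * Suc n"
    using Suc_times_binomial_eq[of "2 * n" n] by simp
  also have "(2 * n + 1) choose (n + 1) = (2 * n + 1) choose n"
    using binomial_symmetric[of n "2 * n + 1"] by simp
  finally show ?thesis
    by simp
qed

lemma central_binomial_Suc:
  "Suc n * ((2 * Suc n) choose Suc n) = 2 * (2 * n + 1) * ((2 * n) choose n)"
proof -
  have "Suc n * ((2 * Suc n) choose Suc n) = (2 * n + 2) * ((2 * n + 1) choose n)"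
    using Suc_times_binomial[of n "2 * n + 1"] by simp
  also have "\<dots> = 2 * (Suc n * ((2 * n + 1) choose n))"
    by simp
  also have "\<dots> = 2 * (2 * n + 1) * ((2 * n) choose n)"
    by (simp only: binomial_odd_middle mult.assoc)
  finally show ?thesis .
qed

(* C(2n,n)^2 is asymptotic to 16^n / (pi n) and 125/40 is only slightly below pi,
   so the induction step needs n >= 10 and the first cases are computed. *)
lemma central_binomial_sq_le: "((2 * n) choose n)^2 * (125 * n + 32) \<le> 40 * 16 ^ n"
proof (induction n)
  case 0
  show ?case
    by simp
next
  case (Suc n)
  show ?case
  proof (cases "n < 10")
    case True
    have "\<forall>k\<in>{..<11}. ((2 * k) choose k)^2 * (125 * k + 32) \<le> 40 * (16::nat) ^ k"
      by (simp add: lessThan_nat_numeral binomial_fact' fact_numeral)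
    from this[rule_format, of "Suc n"] True show ?thesis
      by simp
  next
    case False
    define C D where "C = (2 * n) choose n" and "D = (2 * Suc n) choose Suc n"
    have cubic: "(2 * n + 1)^2 * (125 * n + 157) \<le> 4 * (n + 1)^2 * (125 * n + 32)"
    proof -
      have "(2 * n + 1)^2 * (125 * n + 157) = 500 * n^3 + 1128 * n^2 + 753 * n + 157"
        by (simp add: power2_eq_square power3_eq_cube algebra_simps)
      also have "\<dots> \<le> 500 * n^3 + 1128 * n^2 + 756 * n + 128"
        using False by simp
      also have "\<dots> = 4 * (n + 1)^2 * (125 * n + 32)"
        by (simp add: power2_eq_square power3_eq_cube algebra_simps)
      finally show ?thesis .
    qed
    have "(Suc n)^2 * (D^2 * (125 * Suc n + 32)) = (Suc n * D)^2 * (125 * n + 157)"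
      by (simp add: power2_eq_square algebra_simps)
    also have "\<dots> = 4 * ((2 * n + 1)^2 * (125 * n + 157)) * C^2"
      unfolding C_def D_def central_binomial_Suc by (simp add: power2_eq_square algebra_simps)
    also have "\<dots> \<le> 16 * (n + 1)^2 * (C^2 * (125 * n + 32))"
      using cubic by (simp add: mult_right_mono)
    also have "\<dots> \<le> 16 * (n + 1)^2 * (40 * 16 ^ n)"
      using Suc.IH by (simp add: C_def)
    also have "\<dots> = (Suc n)^2 * (40 * 16 ^ Suc n)"
      by simp
    finally show ?thesis
      by (simp add: D_def)
  qed
qed

lemma binomial_maximum_sq_le: "25 * s * (s choose (s div 2))^2 \<le> 16 * 4 ^ s"
proof (cases "even s")
  case True
  then obtain n where s: "s = 2 * n"
    by blast
  have "125 * n * ((2 * n) choose n)^2 \<le> 40 * 16 ^ n"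
    using central_binomial_sq_le[of n] by (simp add: algebra_simps)
  moreover have "(4::nat) ^ s = 16 ^ n"
    by (simp add: s power_mult)
  ultimately show ?thesis
    by (simp add: s)
next
  case False
  then obtain n where s: "s = 2 * n + 1"
    by (blast elim: oddE)
  define C M where "C = (2 * n) choose n" and "M = (2 * n + 1) choose n"
  have cubic: "1000 * (2 * n + 1)^3 \<le> 64 * (n + 1)^2 * (125 * n + 32)"
  proof -
    have "1000 * (2 * n + 1)^3 = 8000 * n^3 + 12000 * n^2 + 6000 * n + 1000"
      by (simp add: power2_eq_square power3_eq_cube algebra_simps)
    also have "\<dots> \<le> 8000 * n^3 + 18048 * n^2 + 12096 * n + 2048"
      by simp
    also have "\<dots> = 64 * (n + 1)^2 * (125 * n + 32)"
      by (simp add: power2_eq_square power3_eq_cube algebra_simps)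
    finally show ?thesis .
  qed
  have "(Suc n)^2 * (25 * s * M^2 * (125 * n + 32))
        = 25 * (2 * n + 1) * (Suc n * M)^2 * (125 * n + 32)"
    by (simp add: s power2_eq_square algebra_simps)
  also have "\<dots> = 25 * (2 * n + 1)^3 * (C^2 * (125 * n + 32))"
    unfolding C_def M_def binomial_odd_middle
    by (simp add: power2_eq_square power3_eq_cube algebra_simps)
  also have "\<dots> \<le> 25 * (2 * n + 1)^3 * (40 * 16 ^ n)"
    using central_binomial_sq_le[of n] by (simp add: C_def)
  also have "\<dots> \<le> (64 * (n + 1)^2 * (125 * n + 32)) * 16 ^ n"
    using cubic by simp
  also have "\<dots> = (Suc n)^2 * (16 * 4 ^ s * (125 * n + 32))"
    by (simp add: s power_mult power_add)
  finally have "25 * s * M^2 \<le> 16 * 4 ^ s"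
    by simp
  then show ?thesis
    by (simp add: s M_def)
qed

lemma binomial_maximum_sqrt_le: "5 * real (s choose (s div 2)) * sqrt (real s) \<le> 4 * 2 ^ s"
proof (rule power2_le_imp_le)
  have "(5 * real (s choose (s div 2)) * sqrt (real s))^2
        = real (25 * s * (s choose (s div 2))^2)"
    by (simp add: power_mult_distrib)
  also have "\<dots> \<le> real (16 * 4 ^ s)"
    using binomial_maximum_sq_le by (simp only: of_nat_le_iff)
  also have "\<dots> = (4 * 2 ^ s)^2"
    by (simp add: power2_eq_square flip: power_mult_distrib)
  finally show "(5 * real (s choose (s div 2)) * sqrt (real s))^2 \<le> (4 * 2 ^ s)^2" .
qed simp

lemma residue_binomial_sum_ratio_le:
  assumes "j < m" "j' < m" "m^2 \<le> s"
  shows "real (residue_binomial_sum s m j)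
           \<le> (1 + 4 * real m / sqrt (real s)) * real (residue_binomial_sum s m j')"
proof -
  define N N' M r where "N = real (residue_binomial_sum s m j)"
    and "N' = real (residue_binomial_sum s m j')"
    and "M = real (s choose (s div 2))" and "r = sqrt (real s)"
  have close: "N \<le> N' + M"
    using residue_binomial_sum_le[OF assms(2), of s j] by (simp add: N_def N'_def M_def)
  have "2 ^ s = (\<Sum>i<m. residue_binomial_sum s m i)"
    using sum_residue_binomial_sum assms(1) by simp
  also have "\<dots> \<le> (\<Sum>i<m. residue_binomial_sum s m j' + (s choose (s div 2)))"
    by (intro sum_mono residue_binomial_sum_le assms(2))
  also have "\<dots> = m * (residue_binomial_sum s m j' + (s choose (s div 2)))"
    by simp
  finally have "real (2 ^ s)
                \<le> real (m * (residue_binomial_sum s m j' + (s choose (s div 2))))"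
    by (simp only: of_nat_le_iff)
  then have total: "2 ^ s \<le> real m * (N' + M)"
    by (simp add: N'_def M_def)
  have "real m \<le> r"
    using assms(3) by (simp add: r_def real_le_rsqrt flip: of_nat_power)
  then have "real m * M \<le> r * M"
    by (simp add: M_def mult_right_mono)
  moreover have "5 * (r * M) \<le> 4 * 2 ^ s"
    using binomial_maximum_sqrt_le[of s] by (simp add: M_def r_def mult_ac)
  moreover have "2 ^ s \<le> real m * N' + real m * M"
    using total by (simp add: distrib_left)
  ultimately have "r * M \<le> 4 * (real m * N')"
    by linarith
  moreover have "0 < r"
    using assms(1,3) less_le_trans[of 0 "m^2" s] by (simp add: r_def)
  ultimately have "M \<le> 4 * real m / r * N'"
    by (simp add: field_simps)
  then show ?thesis
    using close by (simp add: N_def N'_def r_def algebra_simps)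
qed

theorem lemma6:
  fixes T b s :: nat
  assumes "b < T" and "b \<noteq> 0" and "s \<ge> T ^ 2"
  shows "bias_at_most T (iter_sumset T {#0, b#} s) (gen_subgroup T b)
           (4 * real (card (gen_subgroup T b)) / sqrt (real s))"
proof -
  define m where "m = T div gcd b T"
  have "0 < T"
    using assms(1) by simp
  then have "0 < m"
    by (simp add: m_def div_greater_zero_iff)
  have "m^2 \<le> T^2"
    by (rule power_mono) (simp_all add: m_def)
  with assms(3) have "m^2 \<le> s"
    by linarith
  show ?thesis
    unfolding bias_at_most_def card_gen_subgroup[OF \<open>0 < T\<close>, of b, folded m_def]
  proof (intro ballI)
    fix a h
    assume "a \<in># iter_sumset T {#0, b#} s" and "h \<in> gen_subgroup T b"
    then obtain k l where a: "a = (k * b) mod T" and h: "h = (l * b) mod T"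
      by (auto simp: iter_sumset_zero_pair gen_subgroup_def)
    have ah: "(a + h) mod T = ((k + l) * b) mod T"
      by (simp add: a h mod_add_eq distrib_right)
    show "real (count (iter_sumset T {#0, b#} s) a)
          \<le> (1 + 4 * real m / sqrt (real s))
              * real (count (iter_sumset T {#0, b#} s) ((a + h) mod T))"
      unfolding ah
      unfolding a count_iter_sumset_zero_pair_mult[OF \<open>0 < T\<close>] m_def[symmetric]
      by (rule residue_binomial_sum_ratio_le)
        (use \<open>0 < m\<close> \<open>m^2 \<le> s\<close> in simp_all)
  qed
qed

end
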